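(* For $\lambda\in[-1,1]$ let $C_\lambda(u_1,u_2,u_3)=u_1u_2u_3[1+\lambda(1-u_1)(1-u_2)(1-u_3)]$ on $[0,1]^3$. If $\lambda\in[-1,0]$, then $C_\lambda$ is $I(1,1,1)$, $I(1,-1,-1)$, $I(-1,1,-1)$ and $I(-1,-1,1)$. If $\lambda\in[0,1]$, then $C_\lambda$ is $I(-1,1,1)$, $I(1,-1,1)$, $I(1,1,-1)$ and $I(-1,-1,-1)$.
   Context: For $\alpha\in\{-1,1\}^n$ and a random vector $\mathbf X$, write $\alpha\mathbf X=(\alpha_1X_1,\dots,\alpha_nX_n)$; inequalities between vectors are componentwise. $\mathbf X$ is $I(\alpha)$ if for every $\mathbf x\in\mathbb R^n$, $\mathbb P[\alpha\mathbf X>\mathbf x\mid \alpha\mathbf X>\mathbf x']\le \mathbb P[\alpha\mathbf X>\mathbf x\mid \alpha\mathbf X>\mathbf x'']$ whenever $\mathbf x'\le\mathbf x''$ and $\mathbb P[\alpha\mathbf X>\mathbf x'']>0$. A copula is $I(\alpha)$ if a random vector with that distribution function is. *)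

theory Defs
  imports "HOL-Probability.Probability"
begin

definition sgt_event :: "'a measure \<Rightarrow> ('a \<Rightarrow> real^'n) \<Rightarrow> real^'n \<Rightarrow> real^'n \<Rightarrow> 'a set" where
  "sgt_event M X \<alpha> x = {\<omega> \<in> space M. \<forall>i. \<alpha> $ i * X \<omega> $ i > x $ i}"

definition cond_prob :: "'a measure \<Rightarrow> 'a set \<Rightarrow> 'a set \<Rightarrow> real" where
  "cond_prob M A B = measure M (A \<inter> B) / measure M B"

definition I_dep :: "'a measure \<Rightarrow> ('a \<Rightarrow> real^'n) \<Rightarrow> real^'n \<Rightarrow> bool" where
  "I_dep M X \<alpha> \<longleftrightarrow>
     (\<forall>x x' x''. (\<forall>i. x' $ i \<le> x'' $ i) \<and> measure M (sgt_event M X \<alpha> x'') > 0 \<longrightarrow>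
        cond_prob M (sgt_event M X \<alpha> x) (sgt_event M X \<alpha> x')
          \<le> cond_prob M (sgt_event M X \<alpha> x) (sgt_event M X \<alpha> x''))"

text \<open>X has distribution function C, where the copula C on [0,1]^n is extended to
  R^n in the standard way, C(x) = C(clamp x) with clamp to [0,1] componentwise.\<close>
definition has_copula_df :: "'a measure \<Rightarrow> ('a \<Rightarrow> real^'n) \<Rightarrow> (real^'n \<Rightarrow> real) \<Rightarrow> bool" where
  "has_copula_df M X C \<longleftrightarrow>
     (\<forall>x. measure M {\<omega> \<in> space M. \<forall>i. X \<omega> $ i \<le> x $ i}
            = C (\<chi> i. max 0 (min 1 (x $ i))))"

definition C_lam :: "real \<Rightarrow> real^3 \<Rightarrow> real" where
  "C_lam l u = u$1 * u$2 * u$3 * (1 + l * (1 - u$1) * (1 - u$2) * (1 - u$3))"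

end

theory Submission
  imports Defs
begin

(*
  For a sign vector \<alpha> put k = -\<lambda>\<alpha>\<^sub>1\<alpha>\<^sub>2\<alpha>\<^sub>3. The box probabilities of C\<^sub>\<lambda> are the product of the
  side lengths plus \<lambda> times the product of the increments of u(1 - u); reflecting a coordinate
  keeps the first product and flips the sign of the second. Hence the survival function of \<alpha>X is
  y \<mapsto> C\<^sub>k(v\<^sub>1, v\<^sub>2, v\<^sub>3), where v\<^sub>i is the probability that \<alpha>\<^sub>i U > y\<^sub>i for U uniform on [0,1].
  For k \<ge> 0 the function C\<^sub>k(u) = \<Prod>u \<cdot> (1 + k \<Prod>(1 - u)) is TP2 on the lattice [0,1]\<^sup>3, because
  \<Prod>a + \<Prod>b \<le> \<Prod>(a \<squnion> b) + \<Prod>(a \<sqinter> b) while \<Prod>a \<Prod>b = \<Prod>(a \<squnion> b) \<Prod>(a \<sqinter> b). Finally a TP2 survival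
  function yields I(\<alpha>), as the intersection of the events \<alpha>X > x and \<alpha>X > x' is the event
  \<alpha>X > x \<squnion> x'. The sign vectors listed for each range of \<lambda> are exactly those with k \<ge> 0.
*)

lemma prod_add_prod_le_prod_max_add_prod_min:
  fixes a b :: "'i \<Rightarrow> real"
  assumes "\<And>i. i \<in> S \<Longrightarrow> 0 \<le> a i" and "\<And>i. i \<in> S \<Longrightarrow> 0 \<le> b i"
  shows "prod a S + prod b S \<le> (\<Prod>i\<in>S. max (a i) (b i)) + (\<Prod>i\<in>S. min (a i) (b i))"
proof -
  define U L where "U = (\<Prod>i\<in>S. max (a i) (b i))" and "L = (\<Prod>i\<in>S. min (a i) (b i))"
  have "prod a S \<le> U" "prod b S \<le> U"
    unfolding U_def using assms by (auto intro!: prod_mono)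
  moreover have "0 \<le> prod a S" "0 \<le> prod b S" "0 \<le> L"
    unfolding L_def using assms by (auto intro!: prod_nonneg)
  moreover have "U * L = prod a S * prod b S"
    unfolding U_def L_def prod.distrib[symmetric] by (rule prod.cong) (auto simp: max_def min_def)
  ultimately have "0 \<le> U * (U + L - prod a S - prod b S)"
    using mult_nonneg_nonneg[of "U - prod a S" "U - prod b S"] by (simp add: algebra_simps)
  with \<open>0 \<le> prod a S\<close> \<open>prod a S \<le> U\<close> \<open>prod b S \<le> U\<close> \<open>0 \<le> L\<close>
  show ?thesis unfolding U_def[symmetric] L_def[symmetric]
    by (cases "U = 0") (auto simp: zero_le_mult_iff)
qed

lemma prod_mult_one_plus_prod_compl_TP2:
  fixes S :: "'i set" and u v :: "'i \<Rightarrow> real" and k :: real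
  defines "f \<equiv> \<lambda>w. (\<Prod>i\<in>S. w i) * (1 + k * (\<Prod>i\<in>S. 1 - w i))"
  assumes "0 \<le> k" and "\<And>i. i \<in> S \<Longrightarrow> 0 \<le> u i \<and> u i \<le> 1" and "\<And>i. i \<in> S \<Longrightarrow> 0 \<le> v i \<and> v i \<le> 1"
  shows "f u * f v \<le> f (\<lambda>i. max (u i) (v i)) * f (\<lambda>i. min (u i) (v i))"
proof -
  define A B U L where "A = (\<Prod>i\<in>S. 1 - u i)" and "B = (\<Prod>i\<in>S. 1 - v i)"
    and "U = (\<Prod>i\<in>S. 1 - min (u i) (v i))" and "L = (\<Prod>i\<in>S. 1 - max (u i) (v i))"
  have compl: "max (1 - x) (1 - y) = 1 - min x y" "min (1 - x) (1 - y) = 1 - max x y" for x y :: real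
    by (simp_all add: max_def min_def)
  have sum: "A + B \<le> U + L"
    using prod_add_prod_le_prod_max_add_prod_min[of S "\<lambda>i. 1 - u i" "\<lambda>i. 1 - v i"] assms(3,4)
    unfolding A_def B_def U_def L_def compl by auto
  have prod: "U * L = A * B"
    unfolding A_def B_def U_def L_def prod.distrib[symmetric]
    by (rule prod.cong) (auto simp: max_def min_def)
  have "(1 + k * A) * (1 + k * B) = 1 + k * (A + B) + k * k * (A * B)"
    by (simp add: algebra_simps)
  also have "\<dots> \<le> 1 + k * (U + L) + k * k * (U * L)"
    using sum prod \<open>0 \<le> k\<close> by (simp add: mult_left_mono)
  also have "\<dots> = (1 + k * L) * (1 + k * U)"
    by (simp add: algebra_simps)
  finally have tilt: "(1 + k * A) * (1 + k * B) \<le> (1 + k * L) * (1 + k * U)" .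
  have lattice: "prod u S * prod v S = (\<Prod>i\<in>S. max (u i) (v i)) * (\<Prod>i\<in>S. min (u i) (v i))"
    unfolding prod.distrib[symmetric] by (rule prod.cong) (auto simp: max_def min_def)
  have nonneg: "0 \<le> prod u S * prod v S"
    using assms(3,4) by (intro mult_nonneg_nonneg prod_nonneg) auto
  have "f u * f v = (prod u S * prod v S) * ((1 + k * A) * (1 + k * B))"
    unfolding f_def A_def B_def by (simp add: mult_ac)
  also have "\<dots> \<le> (prod u S * prod v S) * ((1 + k * L) * (1 + k * U))"
    using tilt nonneg by (rule mult_left_mono)
  also have "\<dots> = f (\<lambda>i. max (u i) (v i)) * f (\<lambda>i. min (u i) (v i))"
    unfolding f_def L_def U_def lattice by (simp add: mult_ac)
  finally show ?thesis .
qed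

lemma prod_UNIV_3: "prod f (UNIV :: 3 set) = f 1 * f 2 * f 3"
  unfolding UNIV_3 by (simp add: ac_simps)

lemma corner_sum_of_products:
  fixes p q :: "real \<Rightarrow> real" and k :: real
  defines "h \<equiv> \<lambda>x y z. p x * p y * p z + k * (q x * q y * q z)"
  shows "h b1 b2 b3 - h b1 b2 a3 - h b1 a2 b3 + h b1 a2 a3 - h a1 b2 b3 + h a1 b2 a3 + h a1 a2 b3 - h a1 a2 a3
    = (p b1 - p a1) * (p b2 - p a2) * (p b3 - p a3) + k * ((q b1 - q a1) * (q b2 - q a2) * (q b3 - q a3))"
  unfolding h_def by (simp add: algebra_simps)

lemma C_lam_eq_prod: "C_lam k u = (\<Prod>i\<in>UNIV. u$i) * (1 + k * (\<Prod>i\<in>UNIV. 1 - u$i))"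
  unfolding C_lam_def prod_UNIV_3 by (simp add: mult_ac)

lemma C_lam_eq_sum: "C_lam k u = (\<Prod>i\<in>UNIV. u$i) + k * (\<Prod>i\<in>UNIV. u$i * (1 - u$i))"
  unfolding C_lam_def prod_UNIV_3 by (simp add: algebra_simps)

lemma C_lam_TP2:
  assumes "0 \<le> k" and "\<forall>i. 0 \<le> u$i \<and> u$i \<le> 1" and "\<forall>i. 0 \<le> v$i \<and> v$i \<le> 1"
  shows "C_lam k u * C_lam k v \<le> C_lam k (sup u v) * C_lam k (inf u v)"
  using prod_mult_one_plus_prod_compl_TP2[where S=UNIV and u="\<lambda>i. u$i" and v="\<lambda>i. v$i" and k=k] assms
  by (simp add: C_lam_eq_prod sup_vec_def inf_vec_def sup_max inf_min)

lemma I_dep_if_survival_TP2: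
  fixes X :: "'a \<Rightarrow> real^'n"
  assumes "finite_measure M" and [measurable]: "X \<in> borel_measurable M"
    and TP2: "\<And>y z. measure M (sgt_event M X \<alpha> y) * measure M (sgt_event M X \<alpha> z)
      \<le> measure M (sgt_event M X \<alpha> (sup y z)) * measure M (sgt_event M X \<alpha> (inf y z))"
  shows "I_dep M X \<alpha>"
proof -
  interpret finite_measure M by fact
  define P where "P y = measure M (sgt_event M X \<alpha> y)" for y
  have P_antimono: "P y \<le> P x" if "x \<le> y" for x y
    unfolding P_def using that
    by (intro finite_measure_mono)
       (auto simp: sgt_event_def less_eq_vec_def intro: le_less_trans, measurable)
  have Int: "sgt_event M X \<alpha> x \<inter> sgt_event M X \<alpha> y = sgt_event M X \<alpha> (sup x y)" for x y
    by (auto simp: sgt_event_def sup_vec_def sup_max)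
  txt \<open>TP2 at \<open>x \<squnion> x'\<close> and \<open>x''\<close>, where \<open>(x \<squnion> x') \<squnion> x'' = x \<squnion> x''\<close> and \<open>(x \<squnion> x') \<sqinter> x'' \<ge> x'\<close>.\<close>
  show ?thesis unfolding I_dep_def cond_prob_def Int P_def[symmetric]
  proof (intro allI impI, elim conjE)
    fix x x' x'' :: "real^'n"
    assume "\<forall>i. x'$i \<le> x''$i" and pos: "0 < P x''"
    then have le: "x' \<le> x''" by (simp add: less_eq_vec_def)
    have "P (sup x x') * P x'' \<le> P (sup (sup x x') x'') * P (inf (sup x x') x'')"
      unfolding P_def by (rule TP2)
    also have "\<dots> \<le> P (sup x x'') * P x'"
    proof (rule mult_mono)
      show "P (sup (sup x x') x'') \<le> P (sup x x'')"
        using le by (simp add: sup.absorb2 sup.assoc)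
      show "P (inf (sup x x') x'') \<le> P x'"
        using le by (intro P_antimono le_infI sup_ge2)
    qed (simp_all add: P_def)
    finally have "P (sup x x') * P x'' \<le> P (sup x x'') * P x'" .
    moreover have "0 < P x'" using pos P_antimono[OF le] by linarith
    ultimately show "P (sup x x') / P x' \<le> P (sup x x'') / P x''"
      using pos by (simp add: divide_simps mult.commute)
  qed
qed

definition unif_cdf :: "real \<Rightarrow> real" where
  "unif_cdf t = max 0 (min 1 t)"

text \<open>\<^term>\<open>unif_surv s t\<close> is the probability that \<open>s \<cdot> U > t\<close> for \<open>U\<close> uniform on \<open>[0,1]\<close> and \<open>s = \<plusminus>1\<close>.\<close>

definition unif_surv :: "real \<Rightarrow> real \<Rightarrow> real" where
  "unif_surv s t = (if s = 1 then 1 - unif_cdf t else unif_cdf (- t))"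

lemma unif_cdf_simps [simp]: "unif_cdf 0 = 0" "unif_cdf 1 = 1"
  "unif_cdf (max t 1) = 1" "unif_cdf (min t 0) = 0"
  by (simp_all add: unif_cdf_def)

lemma unif_surv_bounds: "0 \<le> unif_surv s t" "unif_surv s t \<le> 1"
  by (simp_all add: unif_surv_def unif_cdf_def)

lemma unif_surv_antimono: "a \<le> b \<Longrightarrow> unif_surv s b \<le> unif_surv s a"
  by (auto simp: unif_surv_def unif_cdf_def)

lemma unif_surv_max: "unif_surv s (max a b) = min (unif_surv s a) (unif_surv s b)"
  and unif_surv_min: "unif_surv s (min a b) = max (unif_surv s a) (unif_surv s b)"
  using unif_surv_antimono[of a b s] unif_surv_antimono[of b a s] by (auto simp: max_def min_def)

locale C_lam_distributed = prob_space M for M :: "'a measure" +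
  fixes X :: "'a \<Rightarrow> real^3" and lam :: real
  assumes measurable_X[measurable]: "X \<in> borel_measurable M"
    and cdf_X: "has_copula_df M X (C_lam lam)"
begin

text \<open>A lower bound \<open>-\<infinity>\<close> means that the coordinate is only bounded from above.\<close>

definition rect_prob :: "ereal \<Rightarrow> real \<Rightarrow> ereal \<Rightarrow> real \<Rightarrow> ereal \<Rightarrow> real \<Rightarrow> real" where
  "rect_prob a1 b1 a2 b2 a3 b3 = measure M {\<omega>\<in>space M.
     a1 < ereal (X \<omega> $ 1) \<and> X \<omega> $ 1 \<le> b1 \<and> a2 < ereal (X \<omega> $ 2) \<and> X \<omega> $ 2 \<le> b2 \<and>
     a3 < ereal (X \<omega> $ 3) \<and> X \<omega> $ 3 \<le> b3}"

lemma sets_rect [simp]: "{\<omega>\<in>space M.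
     a1 < ereal (X \<omega> $ 1) \<and> X \<omega> $ 1 \<le> b1 \<and> a2 < ereal (X \<omega> $ 2) \<and> X \<omega> $ 2 \<le> b2 \<and>
     a3 < ereal (X \<omega> $ 3) \<and> X \<omega> $ 3 \<le> b3} \<in> sets M"
  by measurable

lemma rect_prob_split_1: "a \<le> b1 \<Longrightarrow>
    rect_prob (ereal a) b1 a2 b2 a3 b3 = rect_prob (-\<infinity>) b1 a2 b2 a3 b3 - rect_prob (-\<infinity>) a a2 b2 a3 b3"
  unfolding rect_prob_def
  by (subst finite_measure_Diff[symmetric]) (auto intro!: arg_cong[where f = "measure M"])

lemma rect_prob_split_2: "a \<le> b2 \<Longrightarrow>
    rect_prob a1 b1 (ereal a) b2 a3 b3 = rect_prob a1 b1 (-\<infinity>) b2 a3 b3 - rect_prob a1 b1 (-\<infinity>) a a3 b3"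
  unfolding rect_prob_def
  by (subst finite_measure_Diff[symmetric]) (auto intro!: arg_cong[where f = "measure M"])

lemma rect_prob_split_3: "a \<le> b3 \<Longrightarrow>
    rect_prob a1 b1 a2 b2 (ereal a) b3 = rect_prob a1 b1 a2 b2 (-\<infinity>) b3 - rect_prob a1 b1 a2 b2 (-\<infinity>) a"
  unfolding rect_prob_def
  by (subst finite_measure_Diff[symmetric]) (auto intro!: arg_cong[where f = "measure M"])

lemma rect_prob_lower_orthant:
  "rect_prob (-\<infinity>) c1 (-\<infinity>) c2 (-\<infinity>) c3 = C_lam lam (vector [unif_cdf c1, unif_cdf c2, unif_cdf c3])"
proof -
  have "(\<chi> i. max 0 (min 1 ((vector [c1, c2, c3] :: real^3) $ i))) = vector [unif_cdf c1, unif_cdf c2, unif_cdf c3]"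
    by (simp add: vec_eq_iff forall_3 unif_cdf_def)
  with cdf_X[unfolded has_copula_df_def, rule_format, of "vector [c1, c2, c3]"]
  show ?thesis by (simp add: rect_prob_def forall_3)
qed

lemma measure_box:
  assumes "a \<le> b"
  shows "measure M {\<omega>\<in>space M. \<forall>i. a$i < X \<omega> $ i \<and> X \<omega> $ i \<le> b$i} =
    (\<Prod>i\<in>UNIV. unif_cdf (b$i) - unif_cdf (a$i))
    + lam * (\<Prod>i\<in>UNIV. unif_cdf (b$i) * (1 - unif_cdf (b$i)) - unif_cdf (a$i) * (1 - unif_cdf (a$i)))"
proof -
  define g where "g t = unif_cdf t * (1 - unif_cdf t)" for t
  define R where "R c1 c2 c3 = rect_prob (-\<infinity>) c1 (-\<infinity>) c2 (-\<infinity>) c3" for c1 c2 c3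
  have corner: "R c1 c2 c3 = unif_cdf c1 * unif_cdf c2 * unif_cdf c3 + lam * (g c1 * g c2 * g c3)" for c1 c2 c3
    by (simp add: R_def rect_prob_lower_orthant C_lam_def g_def algebra_simps)
  have "measure M {\<omega>\<in>space M. \<forall>i. a$i < X \<omega> $ i \<and> X \<omega> $ i \<le> b$i}
      = rect_prob (ereal (a$1)) (b$1) (ereal (a$2)) (b$2) (ereal (a$3)) (b$3)"
    by (simp add: rect_prob_def forall_3)
  also have "\<dots> = R (b$1) (b$2) (b$3) - R (b$1) (b$2) (a$3) - R (b$1) (a$2) (b$3) + R (b$1) (a$2) (a$3)
      - R (a$1) (b$2) (b$3) + R (a$1) (b$2) (a$3) + R (a$1) (a$2) (b$3) - R (a$1) (a$2) (a$3)"
    using assms unfolding less_eq_vec_def forall_3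
    by (simp add: R_def rect_prob_split_1 rect_prob_split_2 rect_prob_split_3)
  also have "\<dots> = (unif_cdf (b$1) - unif_cdf (a$1)) * (unif_cdf (b$2) - unif_cdf (a$2)) * (unif_cdf (b$3) - unif_cdf (a$3))
      + lam * ((g (b$1) - g (a$1)) * (g (b$2) - g (a$2)) * (g (b$3) - g (a$3)))"
    unfolding corner by (rule corner_sum_of_products[where p = unif_cdf and q = g and k = lam])
  finally show ?thesis unfolding prod_UNIV_3 g_def by (simp only: mult.assoc)
qed

lemma AE_unit_cube: "AE \<omega> in M. \<forall>i. 0 < X \<omega> $ i \<and> X \<omega> $ i \<le> 1"
proof -
  have "prob {\<omega>\<in>space M. \<forall>i. (0::real^3) $ i < X \<omega> $ i \<and> X \<omega> $ i \<le> (1::real^3) $ i} = 1"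
    by (subst measure_box) (simp_all add: less_eq_vec_def)
  from AE_prob_1[OF this] show ?thesis by eventually_elim simp
qed

lemma measure_component_eq: "measure M {\<omega>\<in>space M. X \<omega> $ j = c} = 0"
proof (rule antisym[OF field_le_epsilon measure_nonneg])
  fix e :: real assume "0 < e"
  define a b :: "real^3" where "a = (\<chi> i. if i = j then c - e else 0)" and "b = (\<chi> i. if i = j then c else 1)"
  have "measure M {\<omega>\<in>space M. X \<omega> $ j = c} \<le> measure M {\<omega>\<in>space M. \<forall>i. a$i < X \<omega> $ i \<and> X \<omega> $ i \<le> b$i}"
    using AE_unit_cube \<open>0 < e\<close>
    by (intro finite_measure_mono_AE) (auto elim!: eventually_mono simp: a_def b_def)
  also have "\<dots> = unif_cdf c - unif_cdf (c - e)"
    using \<open>0 < e\<close> exhaust_3[of j]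
    by (subst measure_box) (auto simp: a_def b_def less_eq_vec_def prod_UNIV_3)
  also have "\<dots> \<le> 0 + e"
    using \<open>0 < e\<close> by (auto simp: unif_cdf_def)
  finally show "measure M {\<omega>\<in>space M. X \<omega> $ j = c} \<le> 0 + e" .
qed

lemma AE_component_neq: "AE \<omega> in M. X \<omega> $ j \<noteq> c"
proof -
  have "{\<omega>\<in>space M. X \<omega> $ j = c} \<in> sets M" by measurable
  with measure_component_eq have "AE \<omega> in M. \<omega> \<notin> {\<omega>\<in>space M. X \<omega> $ j = c}"
    by (simp add: prob_eq_0)
  with AE_space show ?thesis by eventually_elim simp
qed

lemma measure_sgt_event:
  assumes \<alpha>: "\<forall>i. \<alpha>$i = 1 \<or> \<alpha>$i = -1"
  shows "measure M (sgt_event M X \<alpha> y) =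
    C_lam (- lam * \<alpha>$1 * \<alpha>$2 * \<alpha>$3) (\<chi> i. unif_surv (\<alpha>$i) (y$i))"
proof -
  txt \<open>Up to null sets, \<open>\<alpha>\<^sub>i X\<^sub>i > y\<^sub>i\<close> is the condition \<open>a\<^sub>i < X\<^sub>i \<le> b\<^sub>i\<close>, as \<open>X\<close> lives on \<open>(0,1]\<^sup>3\<close>
    and has no atoms.\<close>
  define a b :: "real^3"
    where "a = (\<chi> i. if \<alpha>$i = 1 then y$i else min (- y$i) 0)"
      and "b = (\<chi> i. if \<alpha>$i = 1 then max (y$i) 1 else - y$i)"
  define v where "v i = unif_surv (\<alpha>$i) (y$i)" for i
  have coordinate: "t < s * x \<longleftrightarrow>
      (if s = 1 then t else min (- t) 0) < x \<and> x \<le> (if s = 1 then max t 1 else - t)"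
    if "s = 1 \<or> s = -1" "0 < x" "x \<le> 1" "x \<noteq> - t" for s t x :: real
    using that by auto
  have "AE \<omega> in M. \<forall>i. X \<omega> $ i \<noteq> - y$i"
    by (simp add: AE_all_countable AE_component_neq)
  with AE_unit_cube have "AE \<omega> in M. \<omega> \<in> sgt_event M X \<alpha> y \<longleftrightarrow>
      \<omega> \<in> {\<omega>\<in>space M. \<forall>i. a$i < X \<omega> $ i \<and> X \<omega> $ i \<le> b$i}"
    by eventually_elim (simp add: sgt_event_def a_def b_def coordinate \<alpha>)
  then have "measure M (sgt_event M X \<alpha> y) = measure M {\<omega>\<in>space M. \<forall>i. a$i < X \<omega> $ i \<and> X \<omega> $ i \<le> b$i}"
    by (rule finite_measure_eq_AE) (simp_all add: sgt_event_def, measurable)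
  also have "\<dots> = (\<Prod>i\<in>UNIV. v i) + lam * (\<Prod>i\<in>UNIV. - \<alpha>$i * (v i * (1 - v i)))"
  proof (subst measure_box)
    show "a \<le> b" by (auto simp: a_def b_def less_eq_vec_def)
    have "unif_cdf (b$i) - unif_cdf (a$i) = v i"
      and "unif_cdf (b$i) * (1 - unif_cdf (b$i)) - unif_cdf (a$i) * (1 - unif_cdf (a$i))
        = - \<alpha>$i * (v i * (1 - v i))" for i
      using \<alpha>[rule_format, of i]
      by (auto simp: a_def b_def v_def unif_surv_def algebra_simps)
    then show "(\<Prod>i\<in>UNIV. unif_cdf (b$i) - unif_cdf (a$i))
        + lam * (\<Prod>i\<in>UNIV. unif_cdf (b$i) * (1 - unif_cdf (b$i)) - unif_cdf (a$i) * (1 - unif_cdf (a$i)))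
      = (\<Prod>i\<in>UNIV. v i) + lam * (\<Prod>i\<in>UNIV. - \<alpha>$i * (v i * (1 - v i)))"
      by simp
  qed
  also have "\<dots> = C_lam (- lam * \<alpha>$1 * \<alpha>$2 * \<alpha>$3) (\<chi> i. v i)"
    by (simp add: C_lam_eq_sum prod_UNIV_3 algebra_simps)
  finally show ?thesis unfolding v_def .
qed

lemma I_dep_sign_vector:
  assumes "\<forall>i. \<alpha>$i = 1 \<or> \<alpha>$i = -1" and "0 \<le> - lam * \<alpha>$1 * \<alpha>$2 * \<alpha>$3"
  shows "I_dep M X \<alpha>"
proof (rule I_dep_if_survival_TP2)
  fix y z :: "real^3"
  have "(\<chi> i. unif_surv (\<alpha>$i) (sup y z $ i)) = inf (\<chi> i. unif_surv (\<alpha>$i) (y$i)) (\<chi> i. unif_surv (\<alpha>$i) (z$i))"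
    and "(\<chi> i. unif_surv (\<alpha>$i) (inf y z $ i)) = sup (\<chi> i. unif_surv (\<alpha>$i) (y$i)) (\<chi> i. unif_surv (\<alpha>$i) (z$i))"
    by (simp_all add: vec_eq_iff sup_vec_def inf_vec_def sup_max inf_min unif_surv_max unif_surv_min)
  then show "measure M (sgt_event M X \<alpha> y) * measure M (sgt_event M X \<alpha> z)
      \<le> measure M (sgt_event M X \<alpha> (sup y z)) * measure M (sgt_event M X \<alpha> (inf y z))"
    using C_lam_TP2[OF assms(2)] unfolding measure_sgt_event[OF assms(1)]
    by (simp add: unif_surv_bounds mult.commute)
qed (simp_all add: finite_measure_axioms)

end

theorem mainTheorem7:
  fixes M :: "'a measure" and X :: "'a \<Rightarrow> real^3" and l :: real
  assumes "prob_space M"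
    and "X \<in> borel_measurable M"
    and "has_copula_df M X (C_lam l)"
  shows "(l \<in> {-1..0} \<longrightarrow>
            I_dep M X (vector [1, 1, 1]) \<and> I_dep M X (vector [1, -1, -1]) \<and>
            I_dep M X (vector [-1, 1, -1]) \<and> I_dep M X (vector [-1, -1, 1]))
       \<and> (l \<in> {0..1} \<longrightarrow>
            I_dep M X (vector [-1, 1, 1]) \<and> I_dep M X (vector [1, -1, 1]) \<and>
            I_dep M X (vector [1, 1, -1]) \<and> I_dep M X (vector [-1, -1, -1]))"
proof -
  interpret C_lam_distributed M X l
    using assms by (simp add: C_lam_distributed_def C_lam_distributed_axioms_def)
  show ?thesis
    by (intro conjI impI I_dep_sign_vector) (simp_all add: forall_3)
qed

end
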